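(* Let $d\ge 1$ and $1\le q\le d$. Let $\mathbf{w}_1,\dots,\mathbf{w}_q$ be independent random vectors, each uniformly distributed on the unit sphere $S^{d-1}\subset\mathbb{R}^d$, and let $\{\mathbf{u}_1,\dots,\mathbf{u}_q\}$ be the orthonormal set obtained from them by Gram–Schmidt orthogonalization (this is well defined almost surely). Let $\mathbf{g}\in\mathbb{R}^d$ be a fixed nonzero vector. Define $\mathbf{v}:=\sum_{i=1}^q \operatorname{sign}(\mathbf{g}^\top\mathbf{u}_i)\,\mathbf{u}_i$, $\overline{\mathbf{v}}:=\mathbf{v}/\|\mathbf{v}\|$, $\overline{\mathbf{g}}:=\mathbf{g}/\|\mathbf{g}\|$, and $\hat{\mathbf{g}}:=(\mathbf{g}^\top\overline{\mathbf{v}})\,\overline{\mathbf{v}}$. Then $$\mathbb{E}[\hat{\mathbf{g}}]=\mathbb{E}\big[(\overline{\mathbf{g}}^\top\overline{\mathbf{v}})^2\big]\cdot\mathbf{g}.$$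
   Context: $\operatorname{sign}(a)=+1$ if $a>0$, $-1$ if $a<0$ (the event $\mathbf{g}^\top\mathbf{u}_i=0$ has probability zero). $\|\cdot\|$ is the Euclidean norm. *)

theory Defs
  imports "HOL-Probability.Probability"
begin

text \<open>Uniform distribution on the unit sphere of real^'n: the normalized surface
  measure, realised as the image of the uniform distribution on the open unit ball
  under radial projection x \<mapsto> x / norm x (cone measure = normalized surface measure).\<close>
definition sphere_unif :: "(real ^ 'n) measure" where
  "sphere_unif = distr (uniform_measure lborel (ball 0 1)) borel (\<lambda>x. sgn x)"

primrec gram_schmidt :: "(nat \<Rightarrow> 'a::real_inner) \<Rightarrow> nat \<Rightarrow> 'a list" where
  "gram_schmidt w 0 = []"
| "gram_schmidt w (Suc k) = gram_schmidt w k @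
     [sgn (w k - (\<Sum>u\<leftarrow>gram_schmidt w k. (w k \<bullet> u) *\<^sub>R u))]"

definition sign_vec :: "'a::real_inner \<Rightarrow> nat \<Rightarrow> (nat \<Rightarrow> 'a) \<Rightarrow> 'a" where
  "sign_vec g q w = (\<Sum>i<q. sgn (g \<bullet> (gram_schmidt w q ! i)) *\<^sub>R (gram_schmidt w q ! i))"

end

theory Submission imports Defs begin

text \<open>The joint law of (w_1, ..., w_q) is invariant under every orthogonal map R applied to all
  w_i at once, and Gram--Schmidt commutes with R. So if R fixes g, the random vector g_hat is mapped
  to R g_hat, and its expectation E satisfies R E = E. Taking for R the reflection in any hyperplane
  containing g shows that E has no component orthogonal to g; hence E = c g with
  c = (E . g) / |g|^2, which is the expectation of (g_bar . v_bar)^2.\<close>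

section \<open>Lebesgue measure is invariant under orthogonal transformations\<close>

text \<open>The library proves this only for index types of class wellorder; a copy of an arbitrary
  finite index type, ordered through to_nat, transfers it to real^'n.\<close>

typedef 'a wellordered = "UNIV :: 'a set" by simp

instance wellordered :: (finite) finite
proof
  have "UNIV = Abs_wellordered ` UNIV" by (metis Rep_wellordered_inverse surj_def)
  then show "finite (UNIV :: 'a wellordered set)" by (metis finite finite_imageI)
qed

instantiation wellordered :: (finite) wellorder
begin

definition less_eq_wellordered :: "'a wellordered \<Rightarrow> 'a wellordered \<Rightarrow> bool" where
  "less_eq_wellordered x y \<longleftrightarrow> to_nat (Rep_wellordered x) \<le> to_nat (Rep_wellordered y)"

definition less_wellordered :: "'a wellordered \<Rightarrow> 'a wellordered \<Rightarrow> bool" where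
  "less_wellordered x y \<longleftrightarrow> to_nat (Rep_wellordered x) < to_nat (Rep_wellordered y)"

instance
proof
  fix x y z :: "'a wellordered"
  show "x < y \<longleftrightarrow> x \<le> y \<and> \<not> y \<le> x" "x \<le> x" "x \<le> y \<Longrightarrow> y \<le> z \<Longrightarrow> x \<le> z" "x \<le> y \<or> y \<le> x"
    by (auto simp: less_eq_wellordered_def less_wellordered_def)
  show "x \<le> y \<Longrightarrow> y \<le> x \<Longrightarrow> x = y"
    by (metis Rep_wellordered_inject less_eq_wellordered_def order_antisym to_nat_split)
next
  fix P :: "'a wellordered \<Rightarrow> bool" and a
  assume step: "\<And>x. (\<And>y. y < x \<Longrightarrow> P y) \<Longrightarrow> P x"
  have "P x" if "to_nat (Rep_wellordered x) = n" for n x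
    using that by (induction n arbitrary: x rule: less_induct) (metis step less_wellordered_def)
  then show "P a" by blast
qed

end

definition to_wellordered :: "real^'n \<Rightarrow> real^'n wellordered" where
  "to_wellordered x = (\<chi> i. x $ Rep_wellordered i)"

definition of_wellordered :: "real^'n wellordered \<Rightarrow> real^'n" where
  "of_wellordered y = (\<chi> j. y $ Abs_wellordered j)"

lemma to_of_wellordered [simp]:
  "to_wellordered (of_wellordered y) = y" "of_wellordered (to_wellordered x) = x"
  by (simp_all add: to_wellordered_def of_wellordered_def Rep_wellordered_inverse
      Abs_wellordered_inverse vec_eq_iff)

lemma linear_to_wellordered: "linear to_wellordered"
  by (auto simp: linear_iff to_wellordered_def vec_eq_iff)

lemma linear_of_wellordered: "linear of_wellordered"
  by (auto simp: linear_iff of_wellordered_def vec_eq_iff)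

lemma bij_Rep_wellordered: "bij Rep_wellordered"
  by (rule bij_betwI[where g = Abs_wellordered]) (auto simp: Rep_wellordered_inverse Abs_wellordered_inverse)

lemma inner_to_wellordered: "to_wellordered x \<bullet> to_wellordered y = x \<bullet> y"
  unfolding inner_vec_def to_wellordered_def
  using sum.reindex_bij_betw[OF bij_Rep_wellordered, of "\<lambda>i. x $ i \<bullet> y $ i"] by simp

lemma borel_measurable_linear:
  "linear (f :: 'a::euclidean_space \<Rightarrow> 'b::euclidean_space) \<Longrightarrow> f \<in> borel_measurable borel"
  by (intro borel_measurable_continuous_onI linear_continuous_on)
    (simp add: linear_conv_bounded_linear[symmetric])

lemmas [measurable] = borel_measurable_linear[OF linear_of_wellordered]

lemma prod_Basis_vec: "(\<Prod>b\<in>Basis. x \<bullet> b) = (\<Prod>i\<in>UNIV. x $ i :: real)"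
  by (simp add: Basis_vec_def cart_eq_inner_axis axis_eq_axis prod.UNION_disjoint)

lemma emeasure_lborel_box_cart:
  assumes "\<And>i. l $ i \<le> u $ i"
  shows "emeasure lborel (box l (u :: real^'n)) = (\<Prod>i\<in>UNIV. u $ i - l $ i)"
proof -
  have "\<forall>b\<in>Basis. l \<bullet> b \<le> u \<bullet> b"
    using assms by (auto simp: Basis_vec_def cart_eq_inner_axis[symmetric])
  then show ?thesis
    by (simp add: emeasure_lborel_box_eq prod_Basis_vec[of "u - l"])
qed

lemma distr_lborel_of_wellordered: "distr lborel borel of_wellordered = (lborel :: (real^'n) measure)"
proof (rule lborel_eqI[symmetric])
  fix l u :: "real^'n"
  assume "\<And>b. b \<in> Basis \<Longrightarrow> l \<bullet> b \<le> u \<bullet> b"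
  then have le: "l $ i \<le> u $ i" for i
    by (auto simp: Basis_vec_def cart_eq_inner_axis)
  have all_wellordered: "(\<forall>j. P (Abs_wellordered j)) \<longleftrightarrow> (\<forall>i. P i)" for P
    by (metis Rep_wellordered_inverse)
  have "of_wellordered -` box l u = box (to_wellordered l) (to_wellordered u)"
    by (auto simp: mem_box_cart of_wellordered_def to_wellordered_def Abs_wellordered_inverse
        all_wellordered[symmetric, where P = "\<lambda>i. l $ Rep_wellordered i < _ $ i \<and> _ $ i < u $ Rep_wellordered i"])
  then have "emeasure (distr lborel borel of_wellordered) (box l u)
      = emeasure lborel (box (to_wellordered l) (to_wellordered u))"
    by (subst emeasure_distr) auto
  also have "\<dots> = (\<Prod>i\<in>UNIV. u $ Rep_wellordered i - l $ Rep_wellordered i)"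
    by (subst emeasure_lborel_box_cart) (simp_all add: to_wellordered_def le)
  also have "\<dots> = (\<Prod>i\<in>UNIV. u $ i - l $ i)"
    using prod.reindex_bij_betw[OF bij_Rep_wellordered, of "\<lambda>i. u $ i - l $ i"] by simp
  also have "\<dots> = (\<Prod>b\<in>Basis. (u - l) \<bullet> b)"
    by (simp add: prod_Basis_vec)
  finally show "emeasure (distr lborel borel of_wellordered) (box l u) = (\<Prod>b\<in>Basis. (u - l) \<bullet> b)" .
qed simp

lemma distr_lborel_orthogonal_transformation_wellorder:
  fixes R :: "real^'m::{finite,wellorder} \<Rightarrow> real^'m::_"
  assumes R: "orthogonal_transformation R"
  shows "distr lborel borel R = lborel"
proof (rule lborel_eqI[symmetric])
  note R_measurable[measurable] = borel_measurable_linear[OF orthogonal_transformation_linear[OF R]]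
  fix l u :: "(real, 'm) vec"
  assume le: "\<And>b. b \<in> Basis \<Longrightarrow> l \<bullet> b \<le> u \<bullet> b"
  have preimage: "R -` box l u = inv R ` box l u"
    using orthogonal_transformation_bij[OF R] by (simp add: bij_vimage_eq_inv_image)
  have inv_R: "orthogonal_transformation (inv R)"
    using R orthogonal_transformation_inv by blast
  have "R -` box l u \<in> sets borel"
    using measurable_sets[OF R_measurable, of "box l u"] by simp
  then have "emeasure (distr lborel borel R) (box l u) = emeasure lebesgue (R -` box l u)"
    by (subst emeasure_distr) (auto simp: emeasure_completion)
  also have "\<dots> = ennreal (measure lebesgue (inv R ` box l u))"
    unfolding preimage by (rule emeasure_eq_measure2) (rule measurable_orthogonal_image[OF inv_R]; simp)
  also have "\<dots> = emeasure lebesgue (box l u)"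
    using measure_orthogonal_image[OF inv_R, of "box l u"] by (simp add: emeasure_eq_measure2)
  also have "\<dots> = (\<Prod>b\<in>Basis. (u - l) \<bullet> b)"
    using le by (simp add: emeasure_completion emeasure_lborel_box_eq inner_diff_left)
  finally show "emeasure (distr lborel borel R) (box l u) = (\<Prod>b\<in>Basis. (u - l) \<bullet> b)" .
qed simp

lemma distr_lborel_orthogonal_transformation:
  fixes R :: "real^'n \<Rightarrow> real^'n"
  assumes R: "orthogonal_transformation R"
  shows "distr lborel borel R = lborel"
proof -
  note [measurable] = borel_measurable_linear[OF orthogonal_transformation_linear[OF R]]
  define R' where "R' = to_wellordered \<circ> R \<circ> of_wellordered"
  have "orthogonal_transformation R'"
    unfolding orthogonal_transformation_def
  proof
    show "linear R'"
      unfolding R'_def using R linear_to_wellordered linear_of_wellordered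
      by (intro linear_compose) (auto simp: orthogonal_transformation_linear)
    show "\<forall>x y. R' x \<bullet> R' y = x \<bullet> y"
      using R by (simp add: R'_def inner_to_wellordered orthogonal_transformation_def)
        (metis inner_to_wellordered to_of_wellordered(1))
  qed
  note [measurable] = borel_measurable_linear[OF orthogonal_transformation_linear[OF this]]
  have "distr lborel borel R = distr (distr lborel borel of_wellordered) borel R"
    by (simp add: distr_lborel_of_wellordered)
  also have "\<dots> = distr lborel borel (of_wellordered \<circ> R')"
    by (subst distr_distr) (auto simp: R'_def comp_def)
  also have "\<dots> = distr (distr lborel borel R') borel of_wellordered"
    by (subst distr_distr) auto
  also have "\<dots> = lborel"
    by (simp add: distr_lborel_orthogonal_transformation_wellorder[OF \<open>orthogonal_transformation R'\<close>]
        distr_lborel_of_wellordered)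
  finally show ?thesis .
qed

section \<open>Orthogonal invariance of the uniform distribution on the sphere\<close>

lemma sets_sphere_unif [simp, measurable_cong]: "sets sphere_unif = sets borel"
  by (simp add: sphere_unif_def)

lemma space_sphere_unif [simp]: "space sphere_unif = UNIV"
  by (simp add: sphere_unif_def)

lemma prob_space_uniform_ball: "prob_space (uniform_measure lborel (ball (0::real^'n) 1))"
proof (rule prob_space_uniform_measure)
  have "unit_ball_vol (real CARD('n)) \<noteq> 0"
    by (metis less_irrefl of_nat_0_le_iff unit_ball_vol_pos)
  then show "emeasure lborel (ball (0::real^'n) 1) \<noteq> 0"
    by (simp add: emeasure_ball)
  show "emeasure lborel (ball (0::real^'n) 1) \<noteq> \<infinity>"
    by (simp add: emeasure_ball)
qed

lemma prob_space_sphere_unif: "prob_space (sphere_unif :: (real^'n) measure)"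
  unfolding sphere_unif_def
  by (rule prob_space.prob_space_distr[OF prob_space_uniform_ball])
    (simp add: measurable_cong_sets[OF sets_uniform_measure refl])

lemma sgn_orthogonal_transformation:
  "orthogonal_transformation R \<Longrightarrow> sgn (R x) = R (sgn x)"
  by (simp add: sgn_div_norm orthogonal_transformation_norm orthogonal_transformation_scaleR)

lemma distr_uniform_ball_orthogonal_transformation:
  fixes R :: "real^'n \<Rightarrow> real^'n"
  assumes R: "orthogonal_transformation R"
  shows "distr (uniform_measure lborel (ball 0 1)) borel R = uniform_measure lborel (ball 0 1)"
    (is "distr ?U borel R = ?U")
proof (rule measure_eqI)
  note R_measurable[measurable] = borel_measurable_linear[OF orthogonal_transformation_linear[OF R]]
  show "sets (distr ?U borel R) = sets ?U" by simp
  fix A assume "A \<in> sets (distr ?U borel R)"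
  then have A[measurable]: "A \<in> sets borel" by simp
  have "R -` A \<in> sets borel"
    using measurable_sets[OF R_measurable A] by simp
  have ball_preimage: "ball 0 1 \<inter> R -` A = R -` (ball 0 1 \<inter> A)"
    using orthogonal_transformation_norm[OF R] by auto
  have "emeasure (distr ?U borel R) A = emeasure ?U (R -` A)"
    by (subst emeasure_distr) (auto simp: measurable_cong_sets[OF sets_uniform_measure refl])
  also have "\<dots> = emeasure lborel (R -` (ball 0 1 \<inter> A)) / emeasure lborel (ball (0::real^'n) 1)"
    by (subst emeasure_uniform_measure) (auto simp: ball_preimage \<open>R -` A \<in> sets borel\<close>)
  also have "emeasure lborel (R -` (ball 0 1 \<inter> A)) = emeasure (distr lborel borel R) (ball 0 1 \<inter> A)"
    by (subst emeasure_distr) auto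
  also have "\<dots> = emeasure lborel (ball 0 1 \<inter> A)"
    by (simp add: distr_lborel_orthogonal_transformation[OF R])
  also have "\<dots> / emeasure lborel (ball (0::real^'n) 1) = emeasure ?U A"
    by (simp add: emeasure_uniform_measure)
  finally show "emeasure (distr ?U borel R) A = emeasure ?U A" .
qed

lemma distr_sphere_unif_orthogonal_transformation:
  fixes R :: "real^'n \<Rightarrow> real^'n"
  assumes R: "orthogonal_transformation R"
  shows "distr sphere_unif borel R = sphere_unif"
proof -
  note [measurable] = borel_measurable_linear[OF orthogonal_transformation_linear[OF R]]
  let ?U = "uniform_measure lborel (ball (0::real^'n) 1)"
  have measurable_U: "f \<in> measurable ?U borel" if "f \<in> borel_measurable borel" for f :: "real^'n \<Rightarrow> real^'n"
    using that by (simp add: measurable_cong_sets[OF sets_uniform_measure refl])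
  have "distr sphere_unif borel R = distr ?U borel (R \<circ> sgn)"
    unfolding sphere_unif_def by (subst distr_distr) (auto intro: measurable_U)
  also have "R \<circ> sgn = sgn \<circ> R"
    using sgn_orthogonal_transformation[OF R] by auto
  also have "distr ?U borel (sgn \<circ> R) = distr (distr ?U borel R) borel sgn"
    by (subst distr_distr) (auto intro: measurable_U)
  also have "\<dots> = sphere_unif"
    by (simp add: distr_uniform_ball_orthogonal_transformation[OF R] sphere_unif_def)
  finally show ?thesis .
qed

lemma distr_PiM_sphere_unif_orthogonal_transformation:
  fixes R :: "real^'n \<Rightarrow> real^'n"
  assumes R: "orthogonal_transformation R" and "finite I"
  shows "distr (PiM I (\<lambda>_. sphere_unif)) (PiM I (\<lambda>_. sphere_unif)) (compose I R)
    = PiM I (\<lambda>_. sphere_unif)"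
proof -
  note [measurable] = borel_measurable_linear[OF orthogonal_transformation_linear[OF R]]
  have "distr (PiM I (\<lambda>_. sphere_unif)) (PiM I (\<lambda>_. sphere_unif)) (compose I R)
      = PiM I (\<lambda>_. distr sphere_unif sphere_unif R)"
    by (rule distr_PiM_finite_prob_space') (use \<open>finite I\<close> prob_space_sphere_unif in auto)
  also have "distr sphere_unif sphere_unif R = distr sphere_unif borel R"
    by (rule distr_cong) auto
  finally show ?thesis
    by (simp add: distr_sphere_unif_orthogonal_transformation[OF R])
qed

lemma length_gram_schmidt [simp]: "length (gram_schmidt w k) = k"
  by (induction k) auto

lemma linear_sum_list: "linear R \<Longrightarrow> R (\<Sum>x\<leftarrow>xs. f x) = (\<Sum>x\<leftarrow>xs. R (f x))"
  by (induction xs) (auto simp: linear_add linear_0)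

lemma gram_schmidt_orthogonal_transformation:
  assumes R: "orthogonal_transformation R" and w': "\<And>i. i < k \<Longrightarrow> w' i = R (w i)"
  shows "gram_schmidt w' k = map R (gram_schmidt w k)"
  using w'
proof (induction k)
  case (Suc k)
  then have IH: "gram_schmidt w' k = map R (gram_schmidt w k)" and wk: "w' k = R (w k)"
    by auto
  have linear: "linear R"
    using R by (rule orthogonal_transformation_linear)
  have "(\<Sum>u\<leftarrow>gram_schmidt w' k. (w' k \<bullet> u) *\<^sub>R u) = R (\<Sum>u\<leftarrow>gram_schmidt w k. (w k \<bullet> u) *\<^sub>R u)"
    using R by (simp add: IH wk o_def orthogonal_transformation_def linear_sum_list linear_cmul)
  then have "w' k - (\<Sum>u\<leftarrow>gram_schmidt w' k. (w' k \<bullet> u) *\<^sub>R u)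
      = R (w k - (\<Sum>u\<leftarrow>gram_schmidt w k. (w k \<bullet> u) *\<^sub>R u))"
    by (simp add: wk linear_diff[OF linear])
  then show ?case
    by (simp add: IH sgn_orthogonal_transformation[OF R])
qed simp

lemma sign_vec_orthogonal_transformation:
  assumes R: "orthogonal_transformation R" and "R g = g" and w': "\<And>i. i < q \<Longrightarrow> w' i = R (w i)"
  shows "sign_vec g q w' = R (sign_vec g q w)"
proof -
  have "g \<bullet> R x = g \<bullet> x" for x
    using R \<open>R g = g\<close> by (metis orthogonal_transformation_def)
  moreover have "gram_schmidt w' q = map R (gram_schmidt w q)"
    by (rule gram_schmidt_orthogonal_transformation[OF R w'])
  ultimately show ?thesis
    using R unfolding sign_vec_def
    by (simp add: orthogonal_transformation_def linear_sum linear_cmul)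
qed

lemma borel_measurable_gram_schmidt_nth:
  fixes W :: "'b \<Rightarrow> nat \<Rightarrow> 'a::euclidean_space"
  assumes "\<And>j. j < k \<Longrightarrow> (\<lambda>x. W x j) \<in> borel_measurable N" and "i < k"
  shows "(\<lambda>x. gram_schmidt (W x) k ! i) \<in> borel_measurable N"
  using assms
proof (induction k arbitrary: i)
  case (Suc k)
  then have IH[measurable]: "(\<lambda>x. gram_schmidt (W x) k ! j) \<in> borel_measurable N" if "j < k" for j
    using that by auto
  have [measurable]: "(\<lambda>x. W x k) \<in> borel_measurable N"
    using Suc by auto
  show ?case
  proof (cases "i < k")
    case True
    then show ?thesis using IH by (simp add: nth_append)
  next
    case False
    then have "(\<lambda>x. gram_schmidt (W x) (Suc k) ! i)
      = (\<lambda>x. sgn (W x k - (\<Sum>j<k. (W x k \<bullet> gram_schmidt (W x) k ! j) *\<^sub>R gram_schmidt (W x) k ! j)))"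
      using Suc by (simp add: nth_append sum_list_sum_nth atLeast0LessThan)
    then show ?thesis by simp
  qed
qed simp

lemma borel_measurable_sign_vec:
  fixes W :: "'b \<Rightarrow> nat \<Rightarrow> 'a::euclidean_space"
  assumes "\<And>i. i < q \<Longrightarrow> (\<lambda>x. W x i) \<in> borel_measurable N"
  shows "(\<lambda>x. sign_vec g q (W x)) \<in> borel_measurable N"
proof -
  have [measurable]: "(\<lambda>x. gram_schmidt (W x) q ! i) \<in> borel_measurable N" if "i < q" for i
    using borel_measurable_gram_schmidt_nth[OF assms that] by simp
  show ?thesis unfolding sign_vec_def by measurable
qed

section \<open>Expectations fixed by reflections\<close>

text \<open>For e = 0 this is the identity, since division by 0 yields 0.\<close>

definition reflection :: "'a::real_inner \<Rightarrow> 'a \<Rightarrow> 'a" where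
  "reflection e x = x - (2 * (x \<bullet> e) / (e \<bullet> e)) *\<^sub>R e"

lemma orthogonal_transformation_reflection: "orthogonal_transformation (reflection e)"
  unfolding orthogonal_transformation_def
proof (intro conjI allI)
  show "linear (reflection e)"
    by (auto simp: linear_iff reflection_def inner_add_left algebra_simps add_divide_distrib)
  fix v w
  show "reflection e v \<bullet> reflection e w = v \<bullet> w"
    by (cases "e = 0")
      (auto simp: reflection_def inner_diff_left inner_diff_right inner_commute field_simps)
qed

lemma reflection_fixes_orthogonal: "x \<bullet> e = 0 \<Longrightarrow> reflection e x = x"
  by (simp add: reflection_def)

lemma parallel_if_reflection_invariant:
  fixes g E :: "'a::real_inner"
  assumes "g \<noteq> 0" and invariant: "\<And>e. g \<bullet> e = 0 \<Longrightarrow> reflection e E = E"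
  shows "E = (E \<bullet> g / (g \<bullet> g)) *\<^sub>R g"
proof -
  define e where "e = E - (E \<bullet> g / (g \<bullet> g)) *\<^sub>R g"
  have "g \<bullet> e = 0"
    using \<open>g \<noteq> 0\<close> by (simp add: e_def inner_diff_right inner_commute)
  then have "E \<bullet> e = e \<bullet> e"
    by (simp add: e_def inner_diff_left inner_commute)
  moreover have "(2 * (E \<bullet> e) / (e \<bullet> e)) *\<^sub>R e = 0"
    using invariant[OF \<open>g \<bullet> e = 0\<close>] by (simp add: reflection_def)
  ultimately have "e = 0" by (auto split: if_splits)
  then show ?thesis by (simp add: e_def)
qed

lemma integral_fixed_if_equivariant:
  fixes F :: "'a \<Rightarrow> 'b::euclidean_space"
  assumes T: "T \<in> measurable M M" "distr M M T = M" and F: "integrable M F"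
    and "bounded_linear R" and equivariant: "\<And>w. w \<in> space M \<Longrightarrow> F (T w) = R (F w)"
  shows "R (integral\<^sup>L M F) = integral\<^sup>L M F"
proof -
  have "integral\<^sup>L M F = integral\<^sup>L (distr M M T) F"
    by (simp add: T)
  also have "\<dots> = integral\<^sup>L M (\<lambda>w. F (T w))"
    using F by (intro integral_distr T) auto
  also have "\<dots> = integral\<^sup>L M (\<lambda>w. R (F w))"
    by (intro Bochner_Integration.integral_cong refl equivariant)
  also have "\<dots> = R (integral\<^sup>L M F)"
    by (rule integral_bounded_linear[OF \<open>bounded_linear R\<close> F])
  finally show ?thesis ..
qed

definition sign_estimate :: "real^'n \<Rightarrow> nat \<Rightarrow> (nat \<Rightarrow> real^'n) \<Rightarrow> real^'n" where
  "sign_estimate g q w = (g \<bullet> sgn (sign_vec g q w)) *\<^sub>R sgn (sign_vec g q w)"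

lemma norm_sign_estimate_le: "norm (sign_estimate g q w) \<le> norm g"
proof (cases "sign_vec g q w = 0")
  case False
  then show ?thesis
    using Cauchy_Schwarz_ineq2[of g "sgn (sign_vec g q w)"] by (simp add: sign_estimate_def norm_sgn)
qed (simp add: sign_estimate_def)

lemma sign_estimate_orthogonal_transformation:
  assumes R: "orthogonal_transformation R" and "R g = g" and "\<And>i. i < q \<Longrightarrow> w' i = R (w i)"
  shows "sign_estimate g q w' = R (sign_estimate g q w)"
proof -
  have "g \<bullet> R x = g \<bullet> x" for x
    using R \<open>R g = g\<close> by (metis orthogonal_transformation_def)
  then show ?thesis
    using sign_vec_orthogonal_transformation[OF assms]
    by (simp add: sign_estimate_def sgn_orthogonal_transformation[OF R]
        orthogonal_transformation_scaleR[OF R])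
qed

lemma integrable_sign_estimate:
  "integrable (PiM {..<q} (\<lambda>_. sphere_unif)) (sign_estimate g q)"
proof -
  let ?M = "PiM {..<q} (\<lambda>_. sphere_unif :: (real^'n) measure)"
  interpret prob_space ?M
    by (rule prob_space_PiM) (rule prob_space_sphere_unif)
  have "(\<lambda>w. w i) \<in> borel_measurable ?M" if "i < q" for i
    using measurable_component_singleton[of i "{..<q}" "\<lambda>_. sphere_unif"] that
    by (simp add: measurable_cong_sets[OF refl sets_sphere_unif])
  then have [measurable]: "(\<lambda>w. sign_vec g q w) \<in> borel_measurable ?M"
    by (rule borel_measurable_sign_vec)
  show ?thesis
  proof (rule integrable_const_bound[where B = "norm g"])
    show "AE w in ?M. norm (sign_estimate g q w) \<le> norm g"
      by (intro AE_I2 norm_sign_estimate_le)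
    show "sign_estimate g q \<in> borel_measurable ?M"
      unfolding sign_estimate_def[abs_def] by measurable
  qed
qed

lemma reflection_integral_sign_estimate:
  fixes g e :: "real^'n" and q :: nat
  assumes "g \<bullet> e = 0"
  defines "M \<equiv> PiM {..<q} (\<lambda>_. sphere_unif :: (real^'n) measure)"
  shows "reflection e (integral\<^sup>L M (sign_estimate g q)) = integral\<^sup>L M (sign_estimate g q)"
proof (rule integral_fixed_if_equivariant)
  note R = orthogonal_transformation_reflection[of e]
  note [measurable] = borel_measurable_linear[OF orthogonal_transformation_linear[OF R]]
  show "compose {..<q} (reflection e) \<in> measurable M M"
    unfolding M_def compose_def by measurable
  show "distr M M (compose {..<q} (reflection e)) = M"
    unfolding M_def by (rule distr_PiM_sphere_unif_orthogonal_transformation[OF R]) simp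
  show "integrable M (sign_estimate g q)"
    unfolding M_def by (rule integrable_sign_estimate)
  show "bounded_linear (reflection e)"
    using R by (simp add: linear_conv_bounded_linear[symmetric] orthogonal_transformation_linear)
  have "reflection e g = g"
    using assms by (simp add: reflection_fixes_orthogonal inner_commute)
  then show "sign_estimate g q (compose {..<q} (reflection e) w) = reflection e (sign_estimate g q w)" for w
    by (rule sign_estimate_orthogonal_transformation[OF R]) (simp add: compose_def)
qed

theorem theorem1:
  fixes g :: "real ^ 'n" and q :: nat
  assumes "1 \<le> q" and "q \<le> CARD('n)" and "g \<noteq> 0"
  defines "M \<equiv> PiM {..<q} (\<lambda>_. sphere_unif :: (real ^ 'n) measure)"
  shows "integral\<^sup>L M (\<lambda>w. (g \<bullet> sgn (sign_vec g q w)) *\<^sub>R sgn (sign_vec g q w))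
       = (integral\<^sup>L M (\<lambda>w. (sgn g \<bullet> sgn (sign_vec g q w))\<^sup>2)) *\<^sub>R g"
proof -
  define E where "E = integral\<^sup>L M (sign_estimate g q)"
  have "E = (E \<bullet> g / (g \<bullet> g)) *\<^sub>R g"
    using parallel_if_reflection_invariant[OF \<open>g \<noteq> 0\<close>] reflection_integral_sign_estimate
    unfolding E_def M_def by blast
  moreover have "E \<bullet> g = integral\<^sup>L M (\<lambda>w. sign_estimate g q w \<bullet> g)"
    using integrable_sign_estimate[of q g] by (simp add: E_def M_def)
  moreover have "sign_estimate g q w \<bullet> g = (g \<bullet> sgn (sign_vec g q w))\<^sup>2" for w
    by (simp add: sign_estimate_def power2_eq_square inner_commute)
  moreover have "(sgn g \<bullet> x)\<^sup>2 = (g \<bullet> x)\<^sup>2 / (g \<bullet> g)" for x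
    by (simp add: sgn_div_norm dot_square_norm power_mult_distrib power_inverse divide_inverse)
  ultimately show ?thesis
    by (simp add: E_def sign_estimate_def[abs_def])
qed

end
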